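(* $\dim_H F(1/2,1)\le \frac12$.
   Context: Every $x\in(0,1)\setminus\mathbb{Q}$ has a unique infinite continued fraction expansion $x=[a_1(x),a_2(x),\dots]$ with partial quotients $a_i(x)\in\mathbb{N}=\{1,2,\dots\}$. For $n\in\mathbb{N}$ let $T_n(x):=\max\{a_k(x):1\le k\le n\}$. Define $$F(1/2,1):=\Big\{x\in(0,1)\setminus\mathbb{Q}:\ \lim_{n\to\infty}\frac{T_n(x)}{e^{\sqrt{n}}}=1\Big\}.$$ $\dim_H$ denotes Hausdorff dimension. *)

theory Defs
  imports "HOL-Analysis.Analysis"
begin

definition gauss_map :: "real \<Rightarrow> real" where
  "gauss_map x = frac (1 / x)"

(* n-th partial quotient a_n(x), n \<ge> 1: a_n(x) = floor (1 / G^(n-1)(x)) *)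
definition cf_quot :: "real \<Rightarrow> nat \<Rightarrow> nat" where
  "cf_quot x n = nat \<lfloor>1 / ((gauss_map ^^ (n - 1)) x)\<rfloor>"

definition cf_max :: "nat \<Rightarrow> real \<Rightarrow> nat" where
  "cf_max n x = Max ((cf_quot x) ` {1..n})"

definition F_half_one :: "real set" where
  "F_half_one = {x \<in> {0<..<1} - \<rat>.
      (\<lambda>n. real (cf_max n x) / exp (sqrt (real n))) \<longlonglongrightarrow> 1}"

(* |U|^s with the convention 0^0 = 1 (only used for nonempty U) *)
definition diam_pow :: "real \<Rightarrow> real \<Rightarrow> real" where
  "diam_pow d s = (if s = 0 then 1 else d powr s)"

definition hausdorff_pre :: "real \<Rightarrow> real \<Rightarrow> 'a::metric_space set \<Rightarrow> ennreal" where
  "hausdorff_pre s \<delta> E = (INF U \<in> {U :: nat \<Rightarrow> 'a set. E \<subseteq> (\<Union>i. U i) \<and> (\<forall>i. bounded (U i) \<and> diameter (U i) \<le> \<delta>)}.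
      (\<Sum>i. if U i = {} then 0 else ennreal (diam_pow (diameter (U i)) s)))"

definition hausdorff_measure :: "real \<Rightarrow> 'a::metric_space set \<Rightarrow> ennreal" where
  "hausdorff_measure s E = (SUP \<delta> \<in> {0<..}. hausdorff_pre s \<delta> E)"

definition hausdorff_dim :: "'a::metric_space set \<Rightarrow> ereal" where
  "hausdorff_dim E = Inf {ereal s | s. s \<ge> 0 \<and> hausdorff_measure s E = 0}"

end

(* On F(1/2,1) the running maximum T_n of the partial quotients satisfies |ln T_n - sqrt n| <= eps
   eventually, for every eps > 0.  When T jumps at step j+1 we have ln T_(j+1) = ln a_(j+1) and
   ln T_(j+1) - ln T_j <= 3 eps, so (ln T)^2 grows by at most 6 eps ln a_(j+1); since (ln T_n)^2 ~ n,
   telescoping gives ln (a_1 ... a_n) >= n / (12 eps) - O(1).  The level-n cylinder containing x has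
   length at most (a_1 ... a_n)^(-2), and splitting (a_1 ... a_n)^(-2s) as
   (a_1 ... a_n)^(-(s+1/2)) (a_1 ... a_n)^(-(s-1/2)) bounds the s-dimensional sum of these cylinders by
   zeta(s+1/2)^n exp (-(s-1/2) n / (12 eps)), which tends to 0 for small eps whenever s > 1/2. *)

theory Submission
  imports Defs
begin

section \<open>Hausdorff pre-measures\<close>

definition hausdorff_summand :: "real \<Rightarrow> 'a::metric_space set \<Rightarrow> ennreal" where
  "hausdorff_summand s U = (if U = {} then 0 else ennreal (diam_pow (diameter U) s))"

lemma hausdorff_pre_le_cover:
  fixes E :: "'a::metric_space set"
  assumes "E \<subseteq> (\<Union>i. U i)" "\<And>i. bounded (U i)" "\<And>i. diameter (U i) \<le> \<delta>"
  shows "hausdorff_pre s \<delta> E \<le> (\<Sum>i. hausdorff_summand s (U i))"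
  unfolding hausdorff_pre_def hausdorff_summand_def
  by (rule INF_lower2[of U]) (use assms in auto)

lemma hausdorff_pre_mono:
  fixes A :: "'a::metric_space set"
  assumes "A \<subseteq> B"
  shows "hausdorff_pre s \<delta> A \<le> hausdorff_pre s \<delta> B"
  unfolding hausdorff_pre_def by (rule INF_superset_mono) (use assms in auto)

lemma hausdorff_pre_le_finite_cover:
  fixes E :: "'a::metric_space set" and U :: "'w \<Rightarrow> 'a set"
  assumes "finite W" "E \<subseteq> (\<Union>w\<in>W. U w)" "\<And>w. w \<in> W \<Longrightarrow> bounded (U w)"
    and "\<And>w. w \<in> W \<Longrightarrow> diameter (U w) \<le> \<delta>" "0 \<le> \<delta>" "s > 0"
  shows "hausdorff_pre s \<delta> E \<le> ennreal (\<Sum>w\<in>W. diameter (U w) powr s)"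
proof -
  obtain ws where ws: "set ws = W" "distinct ws"
    using finite_distinct_list[OF assms(1)] by blast
  define V where "V i = (if i < length ws then U (ws ! i) else {})" for i
  have "E \<subseteq> (\<Union>i. V i)"
  proof
    fix x assume "x \<in> E"
    then obtain w where w: "w \<in> W" "x \<in> U w" using assms(2) by blast
    then obtain i where "i < length ws" "ws ! i = w" using ws by (metis in_set_conv_nth)
    then show "x \<in> (\<Union>i. V i)" using w by (auto simp: V_def)
  qed
  moreover have "\<And>i. bounded (V i)" "\<And>i. diameter (V i) \<le> \<delta>"
    using assms(3-5) ws by (auto simp: V_def)
  ultimately have "hausdorff_pre s \<delta> E \<le> (\<Sum>i. hausdorff_summand s (V i))"
    by (rule hausdorff_pre_le_cover)
  also have "\<dots> = (\<Sum>i<length ws. hausdorff_summand s (V i))"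
    by (rule suminf_finite) (auto simp: V_def hausdorff_summand_def)
  also have "\<dots> \<le> (\<Sum>i<length ws. ennreal (diameter (U (ws ! i)) powr s))"
    by (rule sum_mono) (use assms(6) in \<open>auto simp: V_def hausdorff_summand_def diam_pow_def\<close>)
  also have "\<dots> = ennreal (\<Sum>w\<in>W. diameter (U w) powr s)"
    using sum.reindex_bij_betw[OF bij_betw_nth[OF ws(2) refl refl], of "\<lambda>w. diameter (U w) powr s"]
    by (simp add: ws(1) sum_ennreal)
  finally show ?thesis .
qed

lemma hausdorff_pre_Union_le:
  fixes A :: "nat \<Rightarrow> 'a::metric_space set"
  assumes "\<And>N. A N \<subseteq> (\<Union>i. U N i)" "\<And>N i. bounded (U N i)" "\<And>N i. diameter (U N i) \<le> \<delta>"
  shows "hausdorff_pre s \<delta> (\<Union>N. A N) \<le> (\<Sum>N. \<Sum>i. hausdorff_summand s (U N i))"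
proof -
  define V where "V i = (case prod_decode i of (N, j) \<Rightarrow> U N j)" for i
  have "(\<Union>N. A N) \<subseteq> (\<Union>i. V i)"
  proof
    fix x assume "x \<in> (\<Union>N. A N)"
    then obtain N j where "x \<in> U N j" using assms(1) by blast
    then show "x \<in> (\<Union>i. V i)" unfolding V_def by (intro UN_I[of "prod_encode (N, j)"]) auto
  qed
  moreover have "\<And>i. bounded (V i)" "\<And>i. diameter (V i) \<le> \<delta>"
    using assms(2,3) by (auto simp: V_def split: prod.splits)
  ultimately have "hausdorff_pre s \<delta> (\<Union>N. A N) \<le> (\<Sum>i. hausdorff_summand s (V i))"
    by (rule hausdorff_pre_le_cover)
  also have "\<dots> = (\<Sum>N. \<Sum>j. hausdorff_summand s (U N j))"
    using suminf_ennreal_2dimen[of "\<lambda>N. \<Sum>j. hausdorff_summand s (U N j)"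
        "\<lambda>(N, j). hausdorff_summand s (U N j)"]
    by (simp add: V_def case_prod_unfold)
  finally show ?thesis .
qed

lemma hausdorff_pre_Union_eq_0:
  fixes A :: "nat \<Rightarrow> 'a::metric_space set"
  assumes "\<And>N. hausdorff_pre s \<delta> (A N) = 0"
  shows "hausdorff_pre s \<delta> (\<Union>N. A N) = 0"
proof -
  have "hausdorff_pre s \<delta> (\<Union>N. A N) \<le> 0 + ennreal e" if e: "e > 0" for e
  proof -
    have "\<exists>U. A N \<subseteq> (\<Union>i. U i) \<and> (\<forall>i. bounded (U i) \<and> diameter (U i) \<le> \<delta>) \<and>
            (\<Sum>i. hausdorff_summand s (U i)) < ennreal (e / 2 ^ Suc N)" for N
    proof -
      have "hausdorff_pre s \<delta> (A N) < ennreal (e / 2 ^ Suc N)" using assms e by simp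
      then show ?thesis unfolding hausdorff_pre_def hausdorff_summand_def INF_less_iff by auto
    qed
    then obtain U where U: "\<And>N. A N \<subseteq> (\<Union>i. U N i)" "\<And>N i. bounded (U N i)"
       "\<And>N i. diameter (U N i) \<le> \<delta>" "\<And>N. (\<Sum>i. hausdorff_summand s (U N i)) < ennreal (e / 2 ^ Suc N)"
      by metis
    have "hausdorff_pre s \<delta> (\<Union>N. A N) \<le> (\<Sum>N. \<Sum>i. hausdorff_summand s (U N i))"
      using U(1-3) by (rule hausdorff_pre_Union_le)
    also have "\<dots> \<le> (\<Sum>N. ennreal (e / 2 ^ Suc N))"
      by (intro suminf_le less_imp_le U(4)) auto
    also have "\<dots> = ennreal e"
    proof -
      have "(\<lambda>N. e / 2 ^ Suc N) sums e"
        using power_half_series sums_mult[of "\<lambda>n. (1/2::real) ^ Suc n" 1 e]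
        by (simp add: field_simps)
      then show ?thesis using e by (intro suminf_ennreal_eq) auto
    qed
    finally show ?thesis by simp
  qed
  then have "hausdorff_pre s \<delta> (\<Union>N. A N) \<le> 0" by (rule ennreal_le_epsilon) auto
  then show ?thesis by simp
qed

lemma hausdorff_pre_eq_0_if_tendsto:
  fixes E :: "'a::metric_space set"
  assumes "\<forall>\<^sub>F n in sequentially. hausdorff_pre s \<delta> E \<le> ennreal (b n)" "b \<longlonglongrightarrow> 0"
  shows "hausdorff_pre s \<delta> E = 0"
proof -
  have "hausdorff_pre s \<delta> E \<le> ennreal 0"
    by (rule tendsto_le[OF trivial_limit_sequentially tendsto_ennrealI[OF assms(2)]
          tendsto_const assms(1)])
  then show ?thesis by simp
qed

lemma hausdorff_dim_le:
  fixes E :: "'a::metric_space set"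
  assumes "0 \<le> d" "\<And>s. d < s \<Longrightarrow> hausdorff_measure s E = 0"
  shows "hausdorff_dim E \<le> ereal d"
proof (rule dense_ge)
  fix y :: ereal assume y: "ereal d < y"
  show "hausdorff_dim E \<le> y"
  proof (cases y)
    case (real r)
    with y assms have "ereal r \<in> {ereal s | s. s \<ge> 0 \<and> hausdorff_measure s E = 0}" by auto
    then show ?thesis unfolding hausdorff_dim_def real by (rule Inf_lower)
  qed (use y in auto)
qed

section \<open>Continued fraction cylinders\<close>

definition irrationals01 :: "real set" where
  "irrationals01 = {0<..<1} - \<rat>"

lemma gauss_map_in_irrationals01:
  assumes "x \<in> irrationals01"
  shows "gauss_map x \<in> irrationals01"
proof -
  have x: "0 < x" "x \<notin> \<rat>" using assms by (auto simp: irrationals01_def)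
  have "1 / x \<notin> \<rat>" using x(2) by (metis Rats_divide Rats_1 divide_divide_eq_right div_by_1 mult_1)
  have frac_irrational: "frac (1 / x) \<notin> \<rat>"
  proof
    assume "frac (1 / x) \<in> \<rat>"
    then have "frac (1 / x) + of_int \<lfloor>1 / x\<rfloor> \<in> \<rat>" by (intro Rats_add) auto
    then show False using \<open>1 / x \<notin> \<rat>\<close> by (simp add: frac_def)
  qed
  then have "frac (1 / x) \<noteq> 0" by (metis Rats_0)
  with frac_irrational show ?thesis
    by (auto simp: irrationals01_def gauss_map_def frac_lt_1 order.not_eq_order_implies_strict)
qed

lemma funpow_gauss_map_in_irrationals01:
  "x \<in> irrationals01 \<Longrightarrow> (gauss_map ^^ n) x \<in> irrationals01"
  by (induction n) (auto intro: gauss_map_in_irrationals01)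

lemma cf_quot_1_gauss_map:
  assumes "x \<in> irrationals01"
  shows "x = 1 / (real (cf_quot x 1) + gauss_map x)" and "cf_quot x 1 \<ge> 1"
proof -
  have x: "0 < x" "x < 1" using assms by (auto simp: irrationals01_def)
  then have floor_ge_1: "\<lfloor>1 / x\<rfloor> \<ge> 1" by (simp add: le_floor_iff)
  show "cf_quot x 1 \<ge> 1" using nat_mono[OF floor_ge_1] by (simp add: cf_quot_def)
  have "real (cf_quot x 1) + gauss_map x = 1 / x"
    using x by (simp add: cf_quot_def gauss_map_def frac_def)
  then show "x = 1 / (real (cf_quot x 1) + gauss_map x)" by simp
qed

lemma cf_quot_Suc: "k \<ge> 1 \<Longrightarrow> cf_quot x (Suc k) = cf_quot (gauss_map x) k"
  by (cases k) (simp_all add: cf_quot_def funpow_Suc_right del: funpow.simps)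

lemma cf_quot_ge_1:
  assumes "x \<in> irrationals01" "k \<ge> 1"
  shows "cf_quot x k \<ge> 1"
proof -
  have "cf_quot x k = cf_quot ((gauss_map ^^ (k - 1)) x) 1" by (simp add: cf_quot_def)
  then show ?thesis
    using cf_quot_1_gauss_map(2)[OF funpow_gauss_map_in_irrationals01[OF assms(1)]] by simp
qed

text \<open>\<open>cf_branch [a\<^sub>1, \<dots>, a\<^sub>n] y = [a\<^sub>1, \<dots>, a\<^sub>n + y]\<close> inverts the \<open>n\<close>-th iterate of the Gauss map on
  the points whose first \<open>n\<close> partial quotients are \<open>a\<^sub>1, \<dots>, a\<^sub>n\<close>.\<close>

fun cf_branch :: "nat list \<Rightarrow> real \<Rightarrow> real" where
  "cf_branch [] y = y"
| "cf_branch (a # w) y = 1 / (real a + cf_branch w y)"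

definition cf_prefix :: "real \<Rightarrow> nat \<Rightarrow> nat list" where
  "cf_prefix x n = map (cf_quot x) [1..<Suc n]"

definition word_prod :: "nat list \<Rightarrow> real" where
  "word_prod w = prod_list (map real w)"

definition cylinder :: "nat list \<Rightarrow> real set" where
  "cylinder w = cf_branch w ` {0..1}"

lemma word_prod_simps [simp]: "word_prod [] = 1" "word_prod (a # w) = real a * word_prod w"
  by (simp_all add: word_prod_def)

lemma cf_prefix_Suc: "cf_prefix x (Suc n) = cf_quot x 1 # cf_prefix (gauss_map x) n"
proof -
  have "[1..<Suc (Suc n)] = 1 # map Suc [1..<Suc n]"
    by (simp add: upt_conv_Cons map_Suc_upt del: upt_Suc)
  then show ?thesis by (simp add: cf_prefix_def cf_quot_Suc del: upt_Suc)
qed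

lemma cf_branch_cf_prefix:
  "x \<in> irrationals01 \<Longrightarrow> x = cf_branch (cf_prefix x n) ((gauss_map ^^ n) x)"
proof (induction n arbitrary: x)
  case 0
  then show ?case by (simp add: cf_prefix_def)
next
  case (Suc n)
  have "cf_branch (cf_prefix x (Suc n)) ((gauss_map ^^ Suc n) x) =
        1 / (real (cf_quot x 1) + cf_branch (cf_prefix (gauss_map x) n) ((gauss_map ^^ n) (gauss_map x)))"
    by (simp add: cf_prefix_Suc funpow_Suc_right del: funpow.simps)
  also have "\<dots> = x"
    using Suc.IH[OF gauss_map_in_irrationals01[OF Suc.prems]] cf_quot_1_gauss_map(1)[OF Suc.prems]
    by simp
  finally show ?case by simp
qed

lemma cf_prefix_nonzero: "x \<in> irrationals01 \<Longrightarrow> 0 \<notin> set (cf_prefix x n)"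
  using cf_quot_ge_1[of x] by (force simp: cf_prefix_def)

lemma in_cylinder_cf_prefix:
  assumes "x \<in> irrationals01"
  shows "x \<in> cylinder (cf_prefix x n)"
proof -
  have "(gauss_map ^^ n) x \<in> {0..1}"
    using funpow_gauss_map_in_irrationals01[OF assms, of n] by (auto simp: irrationals01_def)
  then show ?thesis using cf_branch_cf_prefix[OF assms, of n] unfolding cylinder_def by blast
qed

lemma word_prod_ge_1: "0 \<notin> set w \<Longrightarrow> word_prod w \<ge> 1"
  by (induction w) (auto simp: word_prod_def intro: order.trans[OF _ mult_mono, of 1 1 1])

lemma cf_branch_in_unit: "0 \<notin> set w \<Longrightarrow> y \<in> {0..1} \<Longrightarrow> cf_branch w y \<in> {0..1}"
proof (induction w)
  case (Cons a w)
  then have "cf_branch w y \<ge> 0" "real a \<ge> 1" by auto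
  then show ?case by auto
qed simp

text \<open>The bound \<open>1 / word_prod w\<^sup>2\<close> is weaker than the true length \<open>1 / (q\<^sub>n (q\<^sub>n + q\<^sub>n\<^sub>-\<^sub>1))\<close> of the
  cylinder, but it suffices here.\<close>

lemma cf_branch_dist_le:
  assumes "0 \<notin> set w" "y \<in> {0..1}" "z \<in> {0..1}"
  shows "\<bar>cf_branch w y - cf_branch w z\<bar> \<le> \<bar>y - z\<bar> / (word_prod w)\<^sup>2"
  using assms(1)
proof (induction w)
  case (Cons a w)
  define u where "u = cf_branch w y"
  define v where "v = cf_branch w z"
  have uv: "u \<ge> 0" "v \<ge> 0"
    using cf_branch_in_unit[of w] Cons.prems assms(2,3) by (auto simp: u_def v_def)
  have a: "real a \<ge> 1" using Cons.prems by auto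
  have IH: "\<bar>u - v\<bar> \<le> \<bar>y - z\<bar> / (word_prod w)\<^sup>2" using Cons by (simp add: u_def v_def)
  have "\<bar>1 / (a + u) - 1 / (a + v)\<bar> = \<bar>u - v\<bar> / ((a + u) * (a + v))"
    using uv a by (simp add: field_simps abs_minus_commute)
  also have "\<dots> \<le> \<bar>u - v\<bar> / (real a * real a)"
    using uv a by (intro divide_left_mono mult_mono) auto
  also have "\<dots> \<le> (\<bar>y - z\<bar> / (word_prod w)\<^sup>2) / (real a * real a)"
    using IH a by (intro divide_right_mono) auto
  also have "\<dots> = \<bar>y - z\<bar> / (word_prod (a # w))\<^sup>2"
    by (simp add: power2_eq_square field_simps)
  finally show ?case by (simp add: u_def v_def)
qed simp

lemma bounded_cylinder: "0 \<notin> set w \<Longrightarrow> bounded (cylinder w)"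
  unfolding cylinder_def by (rule bounded_subset[of "{0..1}"]) (use cf_branch_in_unit in auto)

lemma diameter_cylinder_le:
  assumes "0 \<notin> set w"
  shows "diameter (cylinder w) \<le> 1 / (word_prod w)\<^sup>2"
proof (rule diameter_le)
  fix p q assume "p \<in> cylinder w" "q \<in> cylinder w"
  then obtain y z where yz: "y \<in> {0..1}" "z \<in> {0..1}" "p = cf_branch w y" "q = cf_branch w z"
    by (auto simp: cylinder_def)
  then have "norm (p - q) \<le> \<bar>y - z\<bar> / (word_prod w)\<^sup>2" using cf_branch_dist_le[OF assms] by simp
  also have "\<dots> \<le> 1 / (word_prod w)\<^sup>2" using yz by (intro divide_right_mono) auto
  finally show "norm (p - q) \<le> 1 / (word_prod w)\<^sup>2" .
qed simp

lemma word_prod_powr: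
  "0 \<notin> set w \<Longrightarrow> word_prod w powr c = prod_list (map (\<lambda>a. real a powr c) w)"
proof (induction w)
  case (Cons a w)
  then have "word_prod w \<ge> 1" "real a \<ge> 1" using word_prod_ge_1 by auto
  with Cons show ?case by (simp add: powr_mult)
qed simp

lemma ln_word_prod_cf_prefix:
  assumes "x \<in> irrationals01"
  shows "ln (word_prod (cf_prefix x n)) = (\<Sum>k=1..n. ln (real (cf_quot x k)))"
proof -
  have "ln (word_prod w) = (\<Sum>a\<leftarrow>w. ln (real a))" if "0 \<notin> set w" for w
    using that
  proof (induction w)
    case (Cons a w)
    then have "word_prod w \<ge> 1" "real a \<ge> 1" using word_prod_ge_1 by auto
    with Cons show ?case by (simp add: ln_mult)
  qed simp
  then have "ln (word_prod (cf_prefix x n)) = (\<Sum>k\<leftarrow>[1..<Suc n]. ln (real (cf_quot x k)))"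
    using cf_prefix_nonzero[OF assms] by (simp add: cf_prefix_def o_def)
  also have "\<dots> = (\<Sum>k=1..n. ln (real (cf_quot x k)))"
    by (simp only: sum_set_upt_conv_sum_list_nat[symmetric] set_upt atLeastLessThanSuc_atLeastAtMost)
  finally show ?thesis .
qed

lemma cf_max_Suc:
  assumes "j \<ge> 1"
  shows "cf_max (Suc j) x = max (cf_max j x) (cf_quot x (Suc j))"
proof -
  have "{1..Suc j} = insert (Suc j) {1..j}" by auto
  then have "cf_max (Suc j) x = Max (insert (cf_quot x (Suc j)) (cf_quot x ` {1..j}))"
    by (simp add: cf_max_def)
  also have "\<dots> = max (cf_quot x (Suc j)) (cf_max j x)"
    using assms by (subst Max_insert) (auto simp: cf_max_def)
  finally show ?thesis by (simp add: max.commute)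
qed

lemma cf_quot_le_cf_max: "1 \<le> k \<Longrightarrow> k \<le> n \<Longrightarrow> cf_quot x k \<le> cf_max n x"
  unfolding cf_max_def by (rule Max_ge) auto

lemma cf_max_ge_1: "x \<in> irrationals01 \<Longrightarrow> n \<ge> 1 \<Longrightarrow> cf_max n x \<ge> 1"
  using cf_quot_le_cf_max[of 1 n x] cf_quot_ge_1[of x 1] by auto


section \<open>Growth of the partial quotients\<close>

definition cf_max_band :: "real \<Rightarrow> nat \<Rightarrow> real set" where
  "cf_max_band \<epsilon> N = {x \<in> irrationals01. \<forall>k\<ge>N.
      exp (sqrt k - \<epsilon>) \<le> real (cf_max k x) \<and> real (cf_max k x) \<le> exp (sqrt k + \<epsilon>)}"

lemma cf_max_band_mono: "N \<le> N' \<Longrightarrow> cf_max_band \<epsilon> N \<subseteq> cf_max_band \<epsilon> N'"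
  by (auto simp: cf_max_band_def)

lemma F_half_one_subset_cf_max_band:
  assumes "\<epsilon> > 0"
  shows "F_half_one \<subseteq> (\<Union>N. cf_max_band \<epsilon> N)"
proof
  fix x assume x: "x \<in> F_half_one"
  then have lim: "(\<lambda>n. real (cf_max n x) / exp (sqrt (real n))) \<longlonglongrightarrow> 1"
    by (simp add: F_half_one_def)
  have "exp (-\<epsilon>) < 1" "1 < exp \<epsilon>" using assms by auto
  then have "\<forall>\<^sub>F n in sequentially. exp (-\<epsilon>) < real (cf_max n x) / exp (sqrt n) \<and>
                                    real (cf_max n x) / exp (sqrt n) < exp \<epsilon>"
    using order_tendstoD[OF lim] by (auto intro: eventually_conj)
  then obtain N where N: "\<And>k. k \<ge> N \<Longrightarrow> exp (-\<epsilon>) * exp (sqrt k) < real (cf_max k x) \<and>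
                                        real (cf_max k x) < exp \<epsilon> * exp (sqrt k)"
    unfolding eventually_sequentially by (auto simp: field_simps)
  have "x \<in> cf_max_band \<epsilon> N"
    using x N by (fastforce simp: cf_max_band_def F_half_one_def irrationals01_def
        exp_diff exp_add exp_minus field_simps less_imp_le)
  then show "x \<in> (\<Union>N. cf_max_band \<epsilon> N)" by blast
qed

lemma ln_le_iff_le_exp: "0 < (x::real) \<Longrightarrow> ln x \<le> y \<longleftrightarrow> x \<le> exp y"
  using ln_le_cancel_iff[of x "exp y"] by simp

lemma sqrt_Suc_minus_sqrt_le:
  assumes "\<epsilon> > 0" "1 / \<epsilon>\<^sup>2 \<le> real j"
  shows "sqrt (Suc j) - sqrt j \<le> \<epsilon>"
proof -
  have "1 / \<epsilon> \<le> sqrt j" using assms by (intro real_le_rsqrt) (simp add: power_divide)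
  then have sum_ge: "1 / \<epsilon> \<le> sqrt (Suc j) + sqrt j" by (simp add: add_increasing)
  have "(sqrt (Suc j) - sqrt j) * (sqrt (Suc j) + sqrt j) = 1" by (simp add: algebra_simps)
  moreover have sum_pos: "sqrt (Suc j) + sqrt j > 0" by (simp add: add_pos_nonneg)
  ultimately have "sqrt (Suc j) - sqrt j = 1 / (sqrt (Suc j) + sqrt j)" by (simp add: eq_divide_eq)
  also have "\<dots> \<le> 1 / (1 / \<epsilon>)"
    using sum_ge sum_pos assms(1) by (intro divide_left_mono) auto
  finally show ?thesis by simp
qed

lemma ln_cf_max_in_band:
  assumes "x \<in> cf_max_band \<epsilon> N" "N \<le> k" "1 \<le> k"
  shows "\<bar>ln (cf_max k x) - sqrt k\<bar> \<le> \<epsilon>"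
proof -
  have "x \<in> irrationals01" using assms(1) by (simp add: cf_max_band_def)
  then have T_pos: "0 < real (cf_max k x)" using cf_max_ge_1 assms(3) by fastforce
  have "exp (sqrt k - \<epsilon>) \<le> real (cf_max k x)" "real (cf_max k x) \<le> exp (sqrt k + \<epsilon>)"
    using assms(1,2) unfolding cf_max_band_def by blast+
  then have "sqrt k - \<epsilon> \<le> ln (cf_max k x)" "ln (cf_max k x) \<le> sqrt k + \<epsilon>"
    using T_pos by (simp_all add: ln_ge_iff ln_le_iff_le_exp)
  then show ?thesis by linarith
qed

text \<open>If the running maximum jumps at \<open>j + 1\<close>, then \<open>ln T\<^sub>j\<^sub>+\<^sub>1 = ln a\<^sub>j\<^sub>+\<^sub>1\<close>, while on the band
  \<open>ln T\<^sub>j\<^sub>+\<^sub>1 - ln T\<^sub>j \<le> \<surd>(j+1) - \<surd>j + 2\<epsilon> \<le> 3\<epsilon>\<close>.\<close>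

lemma ln_cf_max_sq_Suc_le:
  assumes x: "x \<in> cf_max_band \<epsilon> N" and \<epsilon>: "\<epsilon> > 0"
    and N: "N \<ge> 1" "1 / \<epsilon>\<^sup>2 \<le> real N" and j: "j \<ge> N"
  shows "(ln (cf_max (Suc j) x))\<^sup>2 - (ln (cf_max j x))\<^sup>2 \<le> 6 * \<epsilon> * ln (cf_quot x (Suc j))"
proof (cases "cf_max (Suc j) x = cf_max j x")
  case True
  have "cf_quot x (Suc j) \<ge> 1" using x cf_quot_ge_1 by (simp add: cf_max_band_def)
  with True \<epsilon> show ?thesis by simp
next
  case False
  have x01: "x \<in> irrationals01" using x by (simp add: cf_max_band_def)
  have jump: "cf_max (Suc j) x = cf_quot x (Suc j)" "cf_max j x < cf_max (Suc j) x"
    using False cf_max_Suc[of j x] j N by (auto simp: max_def split: if_splits)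
  define u where "u = ln (real (cf_max (Suc j) x))"
  define v where "v = ln (real (cf_max j x))"
  have "cf_max j x \<ge> 1" using cf_max_ge_1[OF x01] j N by simp
  then have v: "0 \<le> v" "v \<le> u" using jump(2) by (simp_all add: u_def v_def)
  have "sqrt j - \<epsilon> \<le> v" "u \<le> sqrt (Suc j) + \<epsilon>"
    using ln_cf_max_in_band[OF x, of j] ln_cf_max_in_band[OF x, of "Suc j"] j N
    by (auto simp: u_def v_def abs_le_iff)
  moreover have "sqrt (Suc j) - sqrt j \<le> \<epsilon>"
    using sqrt_Suc_minus_sqrt_le[OF \<epsilon>] N j by (meson of_nat_mono order_trans)
  ultimately have "u - v \<le> 3 * \<epsilon>" by linarith
  have "u\<^sup>2 - v\<^sup>2 = (u - v) * (u + v)" by (simp add: power2_eq_square algebra_simps)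
  also have "\<dots> \<le> (3 * \<epsilon>) * (2 * u)" using \<open>u - v \<le> 3 * \<epsilon>\<close> v by (intro mult_mono) auto
  finally show ?thesis using jump(1) by (simp add: u_def v_def)
qed

lemma ln_cf_max_sq_diff_le:
  assumes x: "x \<in> cf_max_band \<epsilon> N" and \<epsilon>: "\<epsilon> > 0"
    and N: "N \<ge> 1" "1 / \<epsilon>\<^sup>2 \<le> real N" and n: "n \<ge> N"
  shows "(ln (cf_max n x))\<^sup>2 - (ln (cf_max N x))\<^sup>2 \<le> 6 * \<epsilon> * (\<Sum>k=Suc N..n. ln (cf_quot x k))"
  using n
proof (induction n rule: dec_induct)
  case (step n)
  have "(\<Sum>k=Suc N..Suc n. ln (real (cf_quot x k))) =
        ln (cf_quot x (Suc n)) + (\<Sum>k=Suc N..n. ln (cf_quot x k))"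
    using step.hyps by (simp add: sum.nat_ivl_Suc')
  then show ?case
    using step.IH ln_cf_max_sq_Suc_le[OF x \<epsilon> N step.hyps(1)] by (simp add: algebra_simps)
qed simp

lemma sum_ln_cf_quot_ge:
  assumes x: "x \<in> cf_max_band \<epsilon> N" and \<epsilon>: "\<epsilon> > 0"
    and N: "N \<ge> 1" "1 / \<epsilon>\<^sup>2 \<le> real N" and n: "n \<ge> N" "16 * \<epsilon>\<^sup>2 \<le> real n"
  shows "(real n / 2 - (sqrt N + \<epsilon>)\<^sup>2) / (6 * \<epsilon>) \<le> (\<Sum>k=1..n. ln (cf_quot x k))"
proof -
  have x01: "x \<in> irrationals01" using x by (simp add: cf_max_band_def)
  have T_ge_1: "real (cf_max N x) \<ge> 1" "real (cf_max n x) \<ge> 1"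
    using cf_max_ge_1[OF x01] n N by auto
  have lnT: "0 \<le> ln (cf_max N x)" "ln (cf_max N x) \<le> sqrt N + \<epsilon>" "sqrt n - \<epsilon> \<le> ln (cf_max n x)"
    using ln_cf_max_in_band[OF x, of N] ln_cf_max_in_band[OF x, of n] n N T_ge_1
    by (auto simp: abs_le_iff)
  have sqrt_n: "4 * \<epsilon> \<le> sqrt n" using n(2) by (intro real_le_rsqrt) (simp add: power_mult_distrib)
  have "(ln (cf_max N x))\<^sup>2 \<le> (sqrt N + \<epsilon>)\<^sup>2" using lnT by (intro power_mono) auto
  moreover have "(sqrt n - \<epsilon>)\<^sup>2 \<le> (ln (cf_max n x))\<^sup>2" using lnT sqrt_n \<epsilon> by (intro power_mono) auto
  moreover have "real n / 2 \<le> (sqrt n - \<epsilon>)\<^sup>2"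
  proof -
    have "(sqrt n - \<epsilon>)\<^sup>2 = real n - 2 * \<epsilon> * sqrt n + \<epsilon>\<^sup>2" by (simp add: power2_eq_square algebra_simps)
    moreover have "4 * \<epsilon> * sqrt n \<le> sqrt n * sqrt n" using sqrt_n by (intro mult_right_mono) auto
    moreover have "sqrt n * sqrt n = real n" by simp
    ultimately show ?thesis using zero_le_power2[of \<epsilon>] by linarith
  qed
  ultimately have "real n / 2 - (sqrt N + \<epsilon>)\<^sup>2 \<le> 6 * \<epsilon> * (\<Sum>k=Suc N..n. ln (cf_quot x k))"
    using ln_cf_max_sq_diff_le[OF x \<epsilon> N n(1)] by linarith
  then have "(real n / 2 - (sqrt N + \<epsilon>)\<^sup>2) / (6 * \<epsilon>) \<le> (\<Sum>k=Suc N..n. ln (cf_quot x k))"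
    using \<epsilon> by (simp add: field_simps)
  also have "\<dots> \<le> (\<Sum>k=1..n. ln (cf_quot x k))"
    using N cf_quot_ge_1[OF x01] by (intro sum_mono2) auto
  finally show ?thesis .
qed

section \<open>Covering by cylinders\<close>

definition zeta_sum :: "real \<Rightarrow> real" where
  "zeta_sum r = (\<Sum>a. real (Suc a) powr - r)"

lemma sum_powr_le_zeta_sum:
  assumes "r > 1"
  shows "(\<Sum>a=1..B. real a powr - r) \<le> zeta_sum r"
proof -
  have "summable (\<lambda>a. real (Suc a) powr - r)"
    using assms summable_real_powr_iff[of "- r"] summable_Suc_iff[of "\<lambda>a. real a powr - r"] by simp
  moreover have "(\<Sum>a=1..B. real a powr - r) = (\<Sum>a<B. real (Suc a) powr - r)"
    by (simp add: sum.atLeast1_atMost_eq)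
  ultimately show ?thesis unfolding zeta_sum_def by (simp add: sum_le_suminf)
qed

lemma zeta_sum_ge_1: "r > 1 \<Longrightarrow> zeta_sum r \<ge> 1"
  using sum_powr_le_zeta_sum[of r 1] by simp

text \<open>The bound on the letters only serves to make the cover finite.\<close>

lemma cf_max_band_subset_cylinders:
  assumes \<epsilon>: "\<epsilon> > 0" and N: "N \<ge> 1" "1 / \<epsilon>\<^sup>2 \<le> real N" and n: "n \<ge> N" "16 * \<epsilon>\<^sup>2 \<le> real n"
    and D: "D = (real n / 2 - (sqrt N + \<epsilon>)\<^sup>2) / (6 * \<epsilon>)"
  shows "cf_max_band \<epsilon> N \<subseteq> (\<Union>w \<in> {w. set w \<subseteq> {1..nat \<lfloor>exp (sqrt n + \<epsilon>)\<rfloor>} \<and> length w = n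
           \<and> exp D \<le> word_prod w}. cylinder w)"
proof
  fix x assume x: "x \<in> cf_max_band \<epsilon> N"
  then have x01: "x \<in> irrationals01" by (simp add: cf_max_band_def)
  have letters: "set (cf_prefix x n) \<subseteq> {1..nat \<lfloor>exp (sqrt n + \<epsilon>)\<rfloor>}"
  proof
    fix a assume "a \<in> set (cf_prefix x n)"
    then obtain k where k: "1 \<le> k" "k \<le> n" "a = cf_quot x k" by (auto simp: cf_prefix_def)
    have "real (cf_max n x) \<le> exp (sqrt n + \<epsilon>)" using x n by (simp add: cf_max_band_def)
    then have "real a \<le> exp (sqrt n + \<epsilon>)" using cf_quot_le_cf_max[OF k(1,2)] k(3)
      by (meson of_nat_le_iff order_trans)
    then show "a \<in> {1..nat \<lfloor>exp (sqrt n + \<epsilon>)\<rfloor>}"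
      using le_nat_floor cf_quot_ge_1[OF x01 k(1)] k(3) by auto
  qed
  have "D \<le> ln (word_prod (cf_prefix x n))"
    using sum_ln_cf_quot_ge[OF x \<epsilon> N n] by (simp add: D ln_word_prod_cf_prefix[OF x01])
  moreover have "0 < word_prod (cf_prefix x n)"
    using word_prod_ge_1[OF cf_prefix_nonzero[OF x01], of n] by linarith
  ultimately have "exp D \<le> word_prod (cf_prefix x n)" by (simp add: ln_ge_iff)
  with letters show "x \<in> (\<Union>w \<in> {w. set w \<subseteq> {1..nat \<lfloor>exp (sqrt n + \<epsilon>)\<rfloor>} \<and> length w = n
           \<and> exp D \<le> word_prod w}. cylinder w)"
    using in_cylinder_cf_prefix[OF x01, of n] by (intro UN_I[of "cf_prefix x n"]) (auto simp: cf_prefix_def)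
qed

lemma sum_prod_list_lists_length_eq:
  fixes f :: "'a \<Rightarrow> 'b::comm_semiring_1"
  assumes "finite A"
  shows "(\<Sum>w\<in>{w. set w \<subseteq> A \<and> length w = n}. prod_list (map f w)) = (\<Sum>a\<in>A. f a) ^ n"
proof (induction n)
  case 0
  have "{w. set w \<subseteq> A \<and> length w = 0} = {[]}" by auto
  then show ?case by simp
next
  case (Suc n)
  let ?W = "{w. set w \<subseteq> A \<and> length w = n}"
  have "(\<Sum>w\<in>{w. set w \<subseteq> A \<and> length w = Suc n}. prod_list (map f w))
        = (\<Sum>(w, a)\<in>?W \<times> A. f a * prod_list (map f w))"
    unfolding lists_length_Suc_eq by (subst sum.reindex[OF inj_split_Cons]) (simp add: case_prod_unfold)
  also have "\<dots> = (\<Sum>a\<in>A. f a) * (\<Sum>w\<in>?W. prod_list (map f w))"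
    by (simp add: sum.cartesian_product[symmetric] sum_distrib_left sum_distrib_right)
  finally show ?case using Suc by simp
qed

lemma sum_diameter_cylinder_powr_le:
  assumes W: "W \<subseteq> {w. set w \<subseteq> {1..B} \<and> length w = n}" and P: "\<And>w. w \<in> W \<Longrightarrow> P \<le> word_prod w"
    and "0 < P" "0 \<le> s" "0 \<le> t"
  shows "(\<Sum>w\<in>W. diameter (cylinder w) powr s) \<le> (\<Sum>a=1..B. real a powr (t - 2 * s)) ^ n / P powr t"
proof -
  have "diameter (cylinder w) powr s \<le> prod_list (map (\<lambda>a. real a powr (t - 2 * s)) w) / P powr t"
    if w: "w \<in> W" for w
  proof -
    have w0: "0 \<notin> set w" using W w by fastforce
    define Q where "Q = word_prod w"
    have Q: "1 \<le> Q" "P \<le> Q" using word_prod_ge_1[OF w0] P[OF w] by (simp_all add: Q_def)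
    have "diameter (cylinder w) powr s \<le> (1 / Q\<^sup>2) powr s"
      using diameter_cylinder_le[OF w0] diameter_ge_0[OF bounded_cylinder[OF w0]] assms(4)
      by (intro powr_mono2) (auto simp: Q_def)
    also have "\<dots> = Q powr ((t - 2 * s) - t)"
    proof -
      have "1 / Q\<^sup>2 = Q powr (-2)" using Q by (simp add: powr_minus_divide powr_numeral)
      then show ?thesis by (simp add: powr_powr)
    qed
    also have "\<dots> = Q powr (t - 2 * s) / Q powr t" by (rule powr_diff)
    also have "\<dots> \<le> Q powr (t - 2 * s) / P powr t"
      using Q assms(3,5) by (intro divide_left_mono powr_mono2) auto
    finally show ?thesis using word_prod_powr[OF w0] by (simp add: Q_def)
  qed
  then have "(\<Sum>w\<in>W. diameter (cylinder w) powr s)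
             \<le> (\<Sum>w\<in>W. prod_list (map (\<lambda>a. real a powr (t - 2 * s)) w) / P powr t)"
    by (rule sum_mono)
  also have "\<dots> \<le> (\<Sum>w\<in>{w. set w \<subseteq> {1..B} \<and> length w = n}.
                    prod_list (map (\<lambda>a. real a powr (t - 2 * s)) w) / P powr t)"
    using W by (intro sum_mono2 finite_lists_length_eq) (auto intro!: divide_nonneg_nonneg prod_list_nonneg)
  also have "\<dots> = (\<Sum>a=1..B. real a powr (t - 2 * s)) ^ n / P powr t"
    by (simp add: sum_prod_list_lists_length_eq flip: sum_divide_distrib)
  finally show ?thesis .
qed

lemma hausdorff_pre_cf_max_band_le:
  assumes s: "s > 1/2" and \<epsilon>: "\<epsilon> > 0" and N: "N \<ge> 1" "1 / \<epsilon>\<^sup>2 \<le> real N"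
    and n: "n \<ge> N" "16 * \<epsilon>\<^sup>2 \<le> real n"
    and D: "D = (real n / 2 - (sqrt N + \<epsilon>)\<^sup>2) / (6 * \<epsilon>)" and \<delta>: "exp (- 2 * D) \<le> \<delta>"
  shows "hausdorff_pre s \<delta> (cf_max_band \<epsilon> N) \<le> ennreal (zeta_sum (s + 1/2) ^ n / exp ((s - 1/2) * D))"
proof -
  define B where "B = nat \<lfloor>exp (sqrt n + \<epsilon>)\<rfloor>"
  define W where "W = {w. set w \<subseteq> {1..B} \<and> length w = n \<and> exp D \<le> word_prod w}"
  have W_words: "W \<subseteq> {w. set w \<subseteq> {1..B} \<and> length w = n}" by (auto simp: W_def)
  have W_nonzero: "0 \<notin> set w" if "w \<in> W" for w using that by (fastforce simp: W_def)
  have "diameter (cylinder w) \<le> \<delta>" if w: "w \<in> W" for w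
  proof -
    have "diameter (cylinder w) \<le> 1 / (word_prod w)\<^sup>2" by (rule diameter_cylinder_le[OF W_nonzero[OF w]])
    also have "\<dots> \<le> 1 / (exp D)\<^sup>2"
      using w word_prod_ge_1[OF W_nonzero[OF w]] by (intro divide_left_mono power_mono) (auto simp: W_def)
    also have "\<dots> = exp (- 2 * D)" by (simp add: exp_minus field_simps flip: exp_double)
    finally show ?thesis using \<delta> by simp
  qed
  then have "hausdorff_pre s \<delta> (cf_max_band \<epsilon> N) \<le> ennreal (\<Sum>w\<in>W. diameter (cylinder w) powr s)"
    using cf_max_band_subset_cylinders[OF \<epsilon> N n D] s \<delta> bounded_cylinder W_nonzero
      finite_subset[OF W_words finite_lists_length_eq]
    by (intro hausdorff_pre_le_finite_cover) (auto simp: W_def B_def intro: order.trans[OF exp_ge_zero])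
  also have "(\<Sum>w\<in>W. diameter (cylinder w) powr s) \<le>
             (\<Sum>a=1..B. real a powr - (s + 1/2)) ^ n / exp D powr (s - 1/2)"
    using sum_diameter_cylinder_powr_le[OF W_words, of "exp D" s "s - 1/2"] s by (simp add: W_def)
  also have "\<dots> \<le> zeta_sum (s + 1/2) ^ n / exp ((s - 1/2) * D)"
    using s sum_powr_le_zeta_sum[of "s + 1/2" B]
    by (auto simp: powr_def intro!: divide_right_mono power_mono sum_nonneg)
  finally show ?thesis by (simp add: ennreal_leI)
qed

text \<open>Per letter, the cylinder sums grow by the factor \<open>zeta_sum (s + 1/2)\<close> and shrink by the factor
  \<open>exp ((s - 1/2) / (12 \<epsilon>))\<close> coming from the growth of \<open>word_prod\<close> on the band.\<close>

lemma hausdorff_pre_cf_max_band_eq_0: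
  assumes s: "s > 1/2" and \<epsilon>: "\<epsilon> > 0" and zeta: "zeta_sum (s + 1/2) < exp ((s - 1/2) / (12 * \<epsilon>))"
    and N: "N \<ge> 1" "1 / \<epsilon>\<^sup>2 \<le> real N" and \<delta>: "\<delta> > 0"
  shows "hausdorff_pre s \<delta> (cf_max_band \<epsilon> N) = 0"
proof (rule hausdorff_pre_eq_0_if_tendsto)
  define C where "C = (sqrt N + \<epsilon>)\<^sup>2"
  define D where "D n = (real n / 2 - C) / (6 * \<epsilon>)" for n :: nat
  define \<rho> where "\<rho> = zeta_sum (s + 1/2) / exp ((s - 1/2) / (12 * \<epsilon>))"
  have bound_eq: "zeta_sum (s + 1/2) ^ n / exp ((s - 1/2) * D n) = exp ((s - 1/2) * C / (6 * \<epsilon>)) * \<rho> ^ n"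
    for n
  proof -
    have exponent: "(s - 1/2) * D n = real n * ((s - 1/2) / (12 * \<epsilon>)) - (s - 1/2) * C / (6 * \<epsilon>)"
      using \<epsilon> by (simp add: D_def field_simps)
    have "exp ((s - 1/2) * D n) = exp ((s - 1/2) / (12 * \<epsilon>)) ^ n / exp ((s - 1/2) * C / (6 * \<epsilon>))"
      unfolding exponent exp_diff exp_of_nat_mult ..
    then show ?thesis by (simp add: \<rho>_def power_divide)
  qed
  have "\<forall>\<^sub>F n in sequentially. n \<ge> N \<and> 16 * \<epsilon>\<^sup>2 \<le> real n \<and> 2 * C - 6 * \<epsilon> * ln \<delta> \<le> real n"
    using filterlim_real_sequentially[unfolded filterlim_at_top]
    by (intro eventually_conj eventually_ge_at_top) auto
  then show "\<forall>\<^sub>F n in sequentially. hausdorff_pre s \<delta> (cf_max_band \<epsilon> N)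
                 \<le> ennreal (exp ((s - 1/2) * C / (6 * \<epsilon>)) * \<rho> ^ n)"
  proof eventually_elim
    case (elim n)
    then have "- 2 * D n \<le> ln \<delta>" using \<epsilon> by (simp add: D_def field_simps)
    then have "exp (- 2 * D n) \<le> \<delta>" using \<delta> by (metis exp_le_cancel_iff exp_ln)
    moreover have "D n = (real n / 2 - (sqrt N + \<epsilon>)\<^sup>2) / (6 * \<epsilon>)" by (simp add: D_def C_def)
    ultimately have "hausdorff_pre s \<delta> (cf_max_band \<epsilon> N)
                     \<le> ennreal (zeta_sum (s + 1/2) ^ n / exp ((s - 1/2) * D n))"
      using elim by (intro hausdorff_pre_cf_max_band_le[OF s \<epsilon> N]) auto
    then show ?case by (simp only: bound_eq)
  qed
  have "0 \<le> \<rho>" "\<rho> < 1" using zeta zeta_sum_ge_1[of "s + 1/2"] s by (simp_all add: \<rho>_def)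
  then show "(\<lambda>n. exp ((s - 1/2) * C / (6 * \<epsilon>)) * \<rho> ^ n) \<longlonglongrightarrow> 0"
    by (intro tendsto_mult_right_zero LIMSEQ_power_zero) simp
qed

lemma hausdorff_measure_F_half_one_eq_0:
  assumes s: "s > 1/2"
  shows "hausdorff_measure s F_half_one = 0"
proof -
  define Z where "Z = zeta_sum (s + 1/2)"
  define \<epsilon> where "\<epsilon> = (s - 1/2) / (12 * Z)"
  have Z: "Z \<ge> 1" using zeta_sum_ge_1[of "s + 1/2"] s by (simp add: Z_def)
  then have \<epsilon>: "\<epsilon> > 0" using s by (simp add: \<epsilon>_def)
  have "(s - 1/2) / (12 * \<epsilon>) = Z" using s Z by (simp add: \<epsilon>_def field_simps)
  moreover have "Z < exp Z" using exp_ge_add_one_self[of Z] by linarith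
  ultimately have zeta: "zeta_sum (s + 1/2) < exp ((s - 1/2) / (12 * \<epsilon>))"
    by (simp add: Z_def[symmetric])
  define N0 where "N0 = nat \<lceil>1 / \<epsilon>\<^sup>2\<rceil> + 1"
  have "1 / \<epsilon>\<^sup>2 \<le> real (nat \<lceil>1 / \<epsilon>\<^sup>2\<rceil>)" by (rule real_nat_ceiling_ge)
  then have N0: "1 / \<epsilon>\<^sup>2 \<le> real (N + N0)" "N + N0 \<ge> 1" for N
    unfolding N0_def by linarith+
  have "(\<Union>N. cf_max_band \<epsilon> N) \<subseteq> (\<Union>N. cf_max_band \<epsilon> (N + N0))"
    by (intro UN_mono cf_max_band_mono) simp_all
  with F_half_one_subset_cf_max_band[OF \<epsilon>]
  have cover: "F_half_one \<subseteq> (\<Union>N. cf_max_band \<epsilon> (N + N0))" by (rule order.trans)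
  have "hausdorff_pre s \<delta> F_half_one = 0" if "\<delta> > 0" for \<delta>
    using hausdorff_pre_mono[OF cover, of s \<delta>]
      hausdorff_pre_Union_eq_0[OF hausdorff_pre_cf_max_band_eq_0[OF s \<epsilon> zeta N0(2,1) that]]
    by simp
  then show ?thesis by (simp add: hausdorff_measure_def)
qed

theorem theorem2:
  shows "hausdorff_dim F_half_one \<le> ereal (1/2)"
  by (rule hausdorff_dim_le) (simp_all add: hausdorff_measure_F_half_one_eq_0)

end
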